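(* Let $\mathcal{X}_1,\mathcal{X}_2$ be non-empty sets, let $\mathcal{B}_1\subseteq\mathcal{P}(\mathcal{X}_1)\setminus\{\emptyset\}$ and $\mathcal{B}_2\subseteq\mathcal{P}(\mathcal{X}_2)\setminus\{\emptyset\}$, and for $i\in\{1,2\}$ let $\underline{P}_i$ be a coherent conditional lower prevision on a domain $\mathcal{C}_i\subseteq\mathcal{C}(\mathcal{X}_i)$. Let $\mathcal{C}\subseteq\mathcal{C}(\mathcal{X}_1\times\mathcal{X}_2)$ be an independent domain that contains $\mathcal{C}_1$ and $\mathcal{C}_2$. Then the independent natural extension of $\underline{P}_1$ and $\underline{P}_2$ (on $\mathcal{C}$) exists and equals the restriction to $\mathcal{C}$ of $\underline{P}_1\otimes\underline{P}_2$, where $(\underline{P}_1\otimes\underline{P}_2)(f\vert B):=\underline{P}_{\mathcal{D}}(f\vert B)$ for all $(f,B)\in\mathcal{C}(\mathcal{X}_1\times\mathcal{X}_2)$, with $\mathcal{D}:=\mathcal{E}(\underline{P}_1)\otimes\mathcal{E}(\underline{P}_2)$.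
   Context: Gambles on a non-empty set $\mathcal{X}$ are bounded real functions; $\mathcal{G}(\mathcal{X})$ is the set of gambles, $\mathcal{G}_{>0}(\mathcal{X})$ the non-negative non-zero gambles, $\mathbb{I}_A$ the indicator of $A$. For $\mathcal{A}\subseteq\mathcal{G}(\mathcal{X})$: $\mathrm{posi}(\mathcal{A}):=\{\sum_{i=1}^n\lambda_if_i\colon n\in\mathbb{N},\lambda_i>0,f_i\in\mathcal{A}\}$, $\mathcal{E}(\mathcal{A}):=\mathrm{posi}(\mathcal{A}\cup\mathcal{G}_{>0}(\mathcal{X}))$. A coherent set of desirable gambles $\mathcal{D}\subseteq\mathcal{G}(\mathcal{X})$ satisfies: (D1) $f\geq0,f\neq0\Rightarrow f\in\mathcal{D}$; (D2) $f\in\mathcal{D},\lambda>0\Rightarrow\lambda f\in\mathcal{D}$; (D3) $f,g\in\mathcal{D}\Rightarrow f+g\in\mathcal{D}$; (D4) $f\leq0\Rightarrow f\notin\mathcal{D}$. $\mathcal{C}(\mathcal{X}):=\mathcal{G}(\mathcal{X})\times(\mathcal{P}(\mathcal{X})\setminus\{\emptyset\})$. A conditional lower prevision on $\mathcal{C}\subseteq\mathcal{C}(\mathcal{X})$ is a map $\underline{P}\colon\mathcal{C}\to\mathbb{R}\cup\{\pm\infty\}$, $(f,B)\mapsto\underline{P}(f\vert B)$. For $\mathcal{D}\subseteq\mathcal{G}(\mathcal{X})$, $\underline{P}_{\mathcal{D}}(f\vert B):=\sup\{\mu\in\mathbb{R}\colon[f-\mu]\mathbb{I}_B\in\mathcal{D}\}$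 for $(f,B)\in\mathcal{C}(\mathcal{X})$. $\underline{P}$ on $\mathcal{C}$ is coherent if there is a coherent set of desirable gambles $\mathcal{D}$ with $\underline{P}=\underline{P}_{\mathcal{D}}$ on $\mathcal{C}$. For coherent $\underline{P}$ on $\mathcal{C}$, $\mathcal{A}_{\underline{P}}:=\{[f-\mu]\mathbb{I}_B\colon(f,B)\in\mathcal{C},\mu<\underline{P}(f\vert B)\}$ and $\mathcal{E}(\underline{P}):=\mathcal{E}(\mathcal{A}_{\underline{P}})$. Two-variable setting: gambles/events on $\mathcal{X}_i$ are identified with their cylindrical extensions to $\mathcal{X}_1\times\mathcal{X}_2$ (e.g. $B\subseteq\mathcal{X}_1$ with $B\times\mathcal{X}_2$, $f\in\mathcal{G}(\mathcal{X}_1)$ with $f(X_1)(x_1,x_2)=f(x_1)$). For coherent sets of desirable gambles $\mathcal{D}_1,\mathcal{D}_2$ on $\mathcal{X}_1,\mathcal{X}_2$: $\mathcal{D}_1\otimes\mathcal{D}_2:=\mathcal{E}(\mathcal{A}_{1\to2}\cup\mathcal{A}_{2\to1})$ with $\mathcal{A}_{1\to2}:=\{f_2(X_2)\mathbb{I}_{B_1}(X_1)\colon f_2\in\mathcal{D}_2,B_1\in\mathcal{B}_1\cup\{\mathcal{X}_1\}\}$, $\mathcal{A}_{2\to1}:=\{f_1(X_1)\mathbb{I}_{B_2}(X_2)\colon f_1\in\mathcal{D}_1,B_2\in\mathcal{B}_2\cup\{\mathcal{X}_2\}\}$. A domain $\mathcal{C}\subseteq\mathcal{C}(\mathcal{X}_1\times\mathcal{X}_2)$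 is independent if for all $\{i,j\}=\{1,2\}$, all $(f_i,B_i)\in\mathcal{C}(\mathcal{X}_i)$ and all $B_j\in\mathcal{B}_j$: $(f_i,B_i)\in\mathcal{C}\iff(f_i,B_i\cap B_j)\in\mathcal{C}$. A coherent conditional lower prevision $\underline{P}$ on an independent domain $\mathcal{C}$ is epistemically independent if $\underline{P}(f_i\vert B_i)=\underline{P}(f_i\vert B_i\cap B_j)$ for all $\{i,j\}=\{1,2\}$, $(f_i,B_i)\in\mathcal{C}$ (with $f_i,B_i$ on $\mathcal{X}_i$) and $B_j\in\mathcal{B}_j$. An independent product of $\underline{P}_1,\underline{P}_2$ is an epistemically independent coherent conditional lower prevision $\underline{P}$ on $\mathcal{C}$ with $\underline{P}(f_i\vert B_i)=\underline{P}_i(f_i\vert B_i)$ for all $i$ and $(f_i,B_i)\in\mathcal{C}_i$; the independent natural extension is the pointwise smallest independent product. *)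

theory Defs
  imports "HOL-Library.Extended_Real" "HOL-Library.Indicator_Function"
begin

text \<open>Possibility spaces are modelled by (non-empty) types; gambles are bounded
real-valued functions on the type.\<close>

definition gamble :: "('a \<Rightarrow> real) \<Rightarrow> bool" where
  "gamble f \<longleftrightarrow> (\<exists>M. \<forall>x. \<bar>f x\<bar> \<le> M)"

definition gambles :: "('a \<Rightarrow> real) set" where
  "gambles = {f. gamble f}"

definition gambles_pos :: "('a \<Rightarrow> real) set" where
  "gambles_pos = {f. gamble f \<and> (\<forall>x. 0 \<le> f x) \<and> f \<noteq> (\<lambda>x. 0)}"

definition posi :: "('a \<Rightarrow> real) set \<Rightarrow> ('a \<Rightarrow> real) set" where
  "posi A = {g. \<exists>(n::nat) (lam::nat \<Rightarrow> real) (f::nat \<Rightarrow> 'a \<Rightarrow> real).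
       1 \<le> n \<and> (\<forall>i<n. 0 < lam i \<and> f i \<in> A) \<and> g = (\<lambda>x. \<Sum>i<n. lam i * f i x)}"

definition natext :: "('a \<Rightarrow> real) set \<Rightarrow> ('a \<Rightarrow> real) set" where
  "natext A = posi (A \<union> gambles_pos)"

definition coherent_D :: "('a \<Rightarrow> real) set \<Rightarrow> bool" where
  "coherent_D D \<longleftrightarrow> D \<subseteq> gambles
     \<and> (\<forall>f. gamble f \<and> (\<forall>x. 0 \<le> f x) \<and> f \<noteq> (\<lambda>x. 0) \<longrightarrow> f \<in> D)
     \<and> (\<forall>f \<in> D. \<forall>lam::real. 0 < lam \<longrightarrow> (\<lambda>x. lam * f x) \<in> D)
     \<and> (\<forall>f \<in> D. \<forall>g \<in> D. (\<lambda>x. f x + g x) \<in> D)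
     \<and> (\<forall>f. (\<forall>x. f x \<le> 0) \<longrightarrow> f \<notin> D)"

definition cond_pairs :: "(('a \<Rightarrow> real) \<times> 'a set) set" where
  "cond_pairs = gambles \<times> (Pow UNIV - {{}})"

text \<open>Lower prevision induced by a set of desirable gambles (sup over the empty set is -\<infinity>).\<close>
definition lowprev_D :: "('a \<Rightarrow> real) set \<Rightarrow> ('a \<Rightarrow> real) \<Rightarrow> 'a set \<Rightarrow> ereal" where
  "lowprev_D D f B = Sup {ereal mu | mu. (\<lambda>x. (f x - mu) * indicator B x) \<in> D}"

text \<open>A conditional lower prevision on C is a map C -> ereal; we represent it by a total
function whose values outside C are irrelevant.\<close>
definition coherent_lp :: "(('a \<Rightarrow> real) \<times> 'a set) set \<Rightarrow> (('a \<Rightarrow> real) \<Rightarrow> 'a set \<Rightarrow> ereal) \<Rightarrow> bool" where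
  "coherent_lp C P \<longleftrightarrow> C \<subseteq> cond_pairs \<and>
     (\<exists>D. coherent_D D \<and> (\<forall>(f, B) \<in> C. P f B = lowprev_D D f B))"

definition A_lp :: "(('a \<Rightarrow> real) \<times> 'a set) set \<Rightarrow> (('a \<Rightarrow> real) \<Rightarrow> 'a set \<Rightarrow> ereal) \<Rightarrow> ('a \<Rightarrow> real) set" where
  "A_lp C P = {g. \<exists>f B mu. (f, B) \<in> C \<and> ereal mu < P f B \<and> g = (\<lambda>x. (f x - mu) * indicator B x)}"

definition E_lp :: "(('a \<Rightarrow> real) \<times> 'a set) set \<Rightarrow> (('a \<Rightarrow> real) \<Rightarrow> 'a set \<Rightarrow> ereal) \<Rightarrow> ('a \<Rightarrow> real) set" where
  "E_lp C P = natext (A_lp C P)"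

definition cyl1 :: "('a \<Rightarrow> real) \<Rightarrow> ('a \<times> 'b \<Rightarrow> real)" where
  "cyl1 f = (\<lambda>p. f (fst p))"
definition cyl2 :: "('b \<Rightarrow> real) \<Rightarrow> ('a \<times> 'b \<Rightarrow> real)" where
  "cyl2 f = (\<lambda>p. f (snd p))"

definition D_prod :: "'a set set \<Rightarrow> 'b set set \<Rightarrow> ('a \<Rightarrow> real) set \<Rightarrow> ('b \<Rightarrow> real) set
     \<Rightarrow> ('a \<times> 'b \<Rightarrow> real) set" where
  "D_prod BB1 BB2 D1 D2 = natext
     ({g. \<exists>f2 B1. f2 \<in> D2 \<and> B1 \<in> BB1 \<union> {UNIV} \<and> g = (\<lambda>p. f2 (snd p) * indicator B1 (fst p))}
    \<union> {g. \<exists>f1 B2. f1 \<in> D1 \<and> B2 \<in> BB2 \<union> {UNIV} \<and> g = (\<lambda>p. f1 (fst p) * indicator B2 (snd p))})"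

definition indep_domain :: "'a set set \<Rightarrow> 'b set set \<Rightarrow> (('a \<times> 'b \<Rightarrow> real) \<times> ('a \<times> 'b) set) set \<Rightarrow> bool" where
  "indep_domain BB1 BB2 C \<longleftrightarrow>
     (\<forall>(f1, B1) \<in> cond_pairs. \<forall>B2 \<in> BB2.
        (cyl1 f1, B1 \<times> UNIV) \<in> C \<longleftrightarrow> (cyl1 f1, B1 \<times> B2) \<in> C) \<and>
     (\<forall>(f2, B2) \<in> cond_pairs. \<forall>B1 \<in> BB1.
        (cyl2 f2, UNIV \<times> B2) \<in> C \<longleftrightarrow> (cyl2 f2, B1 \<times> B2) \<in> C)"

definition epist_indep :: "'a set set \<Rightarrow> 'b set set \<Rightarrow> (('a \<times> 'b \<Rightarrow> real) \<times> ('a \<times> 'b) set) set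
     \<Rightarrow> (('a \<times> 'b \<Rightarrow> real) \<Rightarrow> ('a \<times> 'b) set \<Rightarrow> ereal) \<Rightarrow> bool" where
  "epist_indep BB1 BB2 C P \<longleftrightarrow> indep_domain BB1 BB2 C \<and> coherent_lp C P \<and>
     (\<forall>(f1, B1) \<in> cond_pairs. (cyl1 f1, B1 \<times> UNIV) \<in> C \<longrightarrow>
        (\<forall>B2 \<in> BB2. P (cyl1 f1) (B1 \<times> UNIV) = P (cyl1 f1) (B1 \<times> B2))) \<and>
     (\<forall>(f2, B2) \<in> cond_pairs. (cyl2 f2, UNIV \<times> B2) \<in> C \<longrightarrow>
        (\<forall>B1 \<in> BB1. P (cyl2 f2) (UNIV \<times> B2) = P (cyl2 f2) (B1 \<times> B2)))"

definition indep_product :: "'a set set \<Rightarrow> 'b set set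
     \<Rightarrow> (('a \<Rightarrow> real) \<times> 'a set) set \<Rightarrow> (('a \<Rightarrow> real) \<Rightarrow> 'a set \<Rightarrow> ereal)
     \<Rightarrow> (('b \<Rightarrow> real) \<times> 'b set) set \<Rightarrow> (('b \<Rightarrow> real) \<Rightarrow> 'b set \<Rightarrow> ereal)
     \<Rightarrow> (('a \<times> 'b \<Rightarrow> real) \<times> ('a \<times> 'b) set) set
     \<Rightarrow> (('a \<times> 'b \<Rightarrow> real) \<Rightarrow> ('a \<times> 'b) set \<Rightarrow> ereal) \<Rightarrow> bool" where
  "indep_product BB1 BB2 C1 P1 C2 P2 C P \<longleftrightarrow> epist_indep BB1 BB2 C P \<and>
     (\<forall>(f1, B1) \<in> C1. P (cyl1 f1) (B1 \<times> UNIV) = P1 f1 B1) \<and>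
     (\<forall>(f2, B2) \<in> C2. P (cyl2 f2) (UNIV \<times> B2) = P2 f2 B2)"

definition indep_natext :: "'a set set \<Rightarrow> 'b set set
     \<Rightarrow> (('a \<Rightarrow> real) \<times> 'a set) set \<Rightarrow> (('a \<Rightarrow> real) \<Rightarrow> 'a set \<Rightarrow> ereal)
     \<Rightarrow> (('b \<Rightarrow> real) \<times> 'b set) set \<Rightarrow> (('b \<Rightarrow> real) \<Rightarrow> 'b set \<Rightarrow> ereal)
     \<Rightarrow> (('a \<times> 'b \<Rightarrow> real) \<times> ('a \<times> 'b) set) set
     \<Rightarrow> (('a \<times> 'b \<Rightarrow> real) \<Rightarrow> ('a \<times> 'b) set \<Rightarrow> ereal) \<Rightarrow> bool" where
  "indep_natext BB1 BB2 C1 P1 C2 P2 C P \<longleftrightarrow> indep_product BB1 BB2 C1 P1 C2 P2 C P \<and>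
     (\<forall>Q. indep_product BB1 BB2 C1 P1 C2 P2 C Q \<longrightarrow> (\<forall>(f, B) \<in> C. P f B \<le> Q f B))"

end

theory Submission
  imports Defs
begin

text \<open>
  Coherence of the product D1 \<otimes> D2 is the heart of the matter. Suppose a finite positive
  combination of the generators f2(X2) I_B1(X1) and f1(X1) I_B2(X2) were nowhere positive. Group
  the points of X1 (and of X2) by the set of conditioning events B1 (resp. B2) containing them.
  This turns the combination into a finite matrix, and a theorem of the alternative, proved by
  Fourier-Motzkin elimination, yields nonnegative weights on the groups of one of the two factors
  that produce a nowhere positive element of D1 or of D2.

  Coherence also gives the marginals: if g is not in D1, then D1 stays coherent when -g is made
  desirable, so the product built from that extension is coherent as well; but if g(X1) I_B(X2)
  were in D1 \<otimes> D2 it would contain g(X1) I_B(X2) - g(X1) I_B(X2) = 0. Therefore the lower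
  prevision of D = E(P1) \<otimes> E(P2) extends P1 and P2 and is epistemically independent. It is
  the smallest independent product because the set of desirable gambles representing any
  independent product contains all generators of D.
\<close>

lemma gamble_add: "gamble f \<Longrightarrow> gamble g \<Longrightarrow> gamble (\<lambda>x. f x + g x)"
proof -
  assume "gamble f" "gamble g"
  then obtain M N where "\<forall>x. \<bar>f x\<bar> \<le> M" "\<forall>x. \<bar>g x\<bar> \<le> N" unfolding gamble_def by blast
  then have "\<forall>x. \<bar>f x + g x\<bar> \<le> M + N" by (meson abs_triangle_ineq add_mono order_trans)
  then show ?thesis unfolding gamble_def by blast
qed

lemma gamble_cmult: "gamble f \<Longrightarrow> gamble (\<lambda>x. c * f x)"
proof -
  assume "gamble f"
  then obtain M where "\<forall>x. \<bar>f x\<bar> \<le> M" unfolding gamble_def by blast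
  then have "\<forall>x. \<bar>c * f x\<bar> \<le> \<bar>c\<bar> * M" by (simp add: abs_mult mult_left_mono)
  then show ?thesis unfolding gamble_def by blast
qed

lemma gamble_diff: "gamble f \<Longrightarrow> gamble g \<Longrightarrow> gamble (\<lambda>x. f x - g x)"
  using gamble_add[of f "\<lambda>x. - 1 * g x"] gamble_cmult[of g "- 1"] by simp

lemma gamble_const: "gamble (\<lambda>x. c)"
  unfolding gamble_def by (intro exI[of _ "\<bar>c\<bar>"]) simp

lemma gamble_comp: "gamble f \<Longrightarrow> gamble (\<lambda>x. f (h x))"
  unfolding gamble_def by auto

lemma gamble_mult_indicator: "gamble f \<Longrightarrow> gamble (\<lambda>x. f x * indicator B (h x))"
proof -
  assume "gamble f"
  then obtain M where "\<forall>x. \<bar>f x\<bar> \<le> M" unfolding gamble_def by blast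
  then have "\<forall>x. \<bar>f x * indicator B (h x)\<bar> \<le> M"
    by (metis abs_ge_zero abs_zero indicator_simps mult_1_right mult_zero_right order_trans)
  then show ?thesis unfolding gamble_def by blast
qed

lemma gamble_shift_indicator: "gamble f \<Longrightarrow> gamble (\<lambda>x. (f x - mu) * indicator B x)"
  by (intro gamble_mult_indicator gamble_diff gamble_const)

lemma gambles_pos_ex_pos:
  assumes "f \<in> gambles_pos"
  obtains x where "0 < f x"
proof -
  from assms obtain x where "f x \<noteq> 0" "0 \<le> f x" unfolding gambles_pos_def by fastforce
  then have "0 < f x" by simp
  then show ?thesis by (rule that)
qed

definition semipositive_on :: "'k set \<Rightarrow> ('k \<Rightarrow> real) \<Rightarrow> bool" where
  "semipositive_on K v \<longleftrightarrow> (\<forall>k\<in>K. 0 \<le> v k) \<and> (\<exists>k\<in>K. 0 < v k)"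

lemma coherent_D_gamble: "coherent_D D \<Longrightarrow> f \<in> D \<Longrightarrow> gamble f"
  unfolding coherent_D_def gambles_def by auto

lemma coherent_D_pos: "coherent_D D \<Longrightarrow> f \<in> gambles_pos \<Longrightarrow> f \<in> D"
  unfolding coherent_D_def gambles_pos_def by blast

lemma coherent_D_cmult: "coherent_D D \<Longrightarrow> f \<in> D \<Longrightarrow> 0 < c \<Longrightarrow> (\<lambda>x. c * f x) \<in> D"
  unfolding coherent_D_def by blast

lemma coherent_D_add: "coherent_D D \<Longrightarrow> f \<in> D \<Longrightarrow> g \<in> D \<Longrightarrow> (\<lambda>x. f x + g x) \<in> D"
  unfolding coherent_D_def by blast

lemma coherent_D_nonpos: "coherent_D D \<Longrightarrow> \<forall>x. f x \<le> 0 \<Longrightarrow> f \<notin> D"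
  unfolding coherent_D_def by blast

lemma coherent_D_upward_closed:
  assumes D: "coherent_D D" and "f \<in> D" "gamble g" "\<forall>x. f x \<le> g x"
  shows "g \<in> D"
proof (cases "g = f")
  case False
  then have "(\<lambda>x. g x - f x) \<in> gambles_pos"
    using assms by (auto simp: gambles_pos_def fun_eq_iff intro: gamble_diff coherent_D_gamble)
  from coherent_D_add[OF D \<open>f \<in> D\<close> coherent_D_pos[OF D this]] show ?thesis by simp
qed (use assms in simp)

lemma coherent_D_not_dominated:
  assumes D: "coherent_D D" and g: "gamble g" "g \<notin> D" and "e \<in> D" "0 \<le> c"
  shows "\<exists>x. c * g x < e x"
proof (rule ccontr)
  assume "\<nexists>x. c * g x < e x"
  then have le: "e x \<le> c * g x" for x by (simp add: not_less)
  show False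
  proof (cases "c = 0")
    case True
    then show False using le coherent_D_nonpos[OF D, of e] \<open>e \<in> D\<close> by simp
  next
    case False
    then have "(\<lambda>x. (1 / c) * e x) \<in> D"
      using \<open>0 \<le> c\<close> coherent_D_cmult[OF D \<open>e \<in> D\<close>, of "1 / c"] by simp
    moreover have "(1 / c) * e x \<le> g x" for x
      using le[of x] \<open>0 \<le> c\<close> False by (simp add: field_simps)
    ultimately show False
      using coherent_D_upward_closed[OF D _ g(1), of "\<lambda>x. (1 / c) * e x"] g(2) by simp
  qed
qed

lemma coherent_D_sum_pos:
  assumes D: "coherent_D D"
  shows "finite K \<Longrightarrow> K \<noteq> {} \<Longrightarrow> \<forall>k\<in>K. 0 < v k \<and> f k \<in> D \<Longrightarrow> (\<lambda>x. \<Sum>k\<in>K. v k * f k x) \<in> D"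
proof (induction K rule: finite_ne_induct)
  case (singleton k)
  then show ?case by (simp add: coherent_D_cmult[OF D])
next
  case (insert k K)
  then show ?case by (simp add: coherent_D_add[OF D] coherent_D_cmult[OF D])
qed

lemma coherent_D_sum:
  assumes D: "coherent_D D" and "finite K" and v: "semipositive_on K v" and "\<forall>k\<in>K. f k \<in> D"
  shows "(\<lambda>x. \<Sum>k\<in>K. v k * f k x) \<in> D"
proof -
  define K' where "K' = {k\<in>K. 0 < v k}"
  have "(\<lambda>x. \<Sum>k\<in>K'. v k * f k x) \<in> D"
    using assms unfolding K'_def semipositive_on_def by (intro coherent_D_sum_pos) auto
  moreover have "(\<Sum>k\<in>K'. v k * f k x) = (\<Sum>k\<in>K. v k * f k x)" for x
    using assms unfolding K'_def semipositive_on_def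
    by (intro sum.mono_neutral_left) (auto simp: order.order_iff_strict)
  ultimately show ?thesis by simp
qed

lemma natextI:
  assumes "1 \<le> (n::nat)" "\<forall>i<n. 0 < lam i \<and> fs i \<in> G \<union> gambles_pos"
    "g = (\<lambda>x. \<Sum>i<n. lam i * fs i x)"
  shows "g \<in> natext G"
  using assms unfolding natext_def posi_def by blast

lemma natextE:
  assumes "g \<in> natext G"
  obtains n :: nat and lam fs where "1 \<le> n" "\<forall>i<n. 0 < lam i \<and> fs i \<in> G \<union> gambles_pos"
    "g = (\<lambda>x. \<Sum>i<n. lam i * fs i x)"
  using assms unfolding natext_def posi_def by blast

lemma natext_generator: "f \<in> G \<union> gambles_pos \<Longrightarrow> f \<in> natext G"
  by (rule natextI[of 1 "\<lambda>_. 1" "\<lambda>_. f"]) auto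

lemma natext_mono: "G \<subseteq> G' \<Longrightarrow> natext G \<subseteq> natext G'"
  unfolding natext_def posi_def by blast

lemma natext_cmult:
  assumes "f \<in> natext G" "0 < c"
  shows "(\<lambda>x. c * f x) \<in> natext G"
proof -
  obtain n :: nat and lam fs where "1 \<le> n" "\<forall>i<n. 0 < lam i \<and> fs i \<in> G \<union> gambles_pos"
    "f = (\<lambda>x. \<Sum>i<n. lam i * fs i x)"
    using assms(1) by (rule natextE)
  with \<open>0 < c\<close> show ?thesis
    by (intro natextI[of n "\<lambda>i. c * lam i" fs]) (auto simp: sum_distrib_left mult.assoc)
qed

lemma sum_lessThan_add: "(\<Sum>i<n + (m::nat). F i) = (\<Sum>i<n. F i) + (\<Sum>i<m. F (n + i))"
  by (induction m) (simp_all add: add.assoc)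

lemma natext_add:
  assumes "f \<in> natext G" "g \<in> natext G"
  shows "(\<lambda>x. f x + g x) \<in> natext G"
proof -
  obtain n :: nat and lam fs where n: "1 \<le> n" "\<forall>i<n. 0 < lam i \<and> fs i \<in> G \<union> gambles_pos"
    "f = (\<lambda>x. \<Sum>i<n. lam i * fs i x)"
    using assms(1) by (rule natextE)
  obtain m :: nat and mu gs where m: "\<forall>i<m. 0 < mu i \<and> gs i \<in> G \<union> gambles_pos"
    "g = (\<lambda>x. \<Sum>i<m. mu i * gs i x)"
    using assms(2) by (rule natextE)
  define lam' where "lam' i = (if i < n then lam i else mu (i - n))" for i
  define fs' where "fs' i = (if i < n then fs i else gs (i - n))" for i
  show ?thesis
  proof (rule natextI[of "n + m" lam' fs'])
    show "\<forall>i<n + m. 0 < lam' i \<and> fs' i \<in> G \<union> gambles_pos"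
      using n m unfolding lam'_def fs'_def by auto
    show "(\<lambda>x. f x + g x) = (\<lambda>x. \<Sum>i<n + m. lam' i * fs' i x)"
      unfolding sum_lessThan_add n(3) m(2) lam'_def fs'_def by simp
  qed (use n in simp)
qed

lemma natext_induct[consumes 1, case_names generator cmult add]:
  assumes "g \<in> natext G"
    and generator: "\<And>f. f \<in> G \<union> gambles_pos \<Longrightarrow> P f"
    and cmult: "\<And>f c. P f \<Longrightarrow> 0 < c \<Longrightarrow> P (\<lambda>x. c * f x)"
    and add: "\<And>f h. P f \<Longrightarrow> P h \<Longrightarrow> P (\<lambda>x. f x + h x)"
  shows "P g"
proof -
  obtain n :: nat and lam fs where n: "1 \<le> n" "\<forall>i<n. 0 < lam i \<and> fs i \<in> G \<union> gambles_pos"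
    "g = (\<lambda>x. \<Sum>i<n. lam i * fs i x)"
    using assms(1) by (rule natextE)
  have "P (\<lambda>x. \<Sum>i<Suc k. lam i * fs i x)" if "Suc k \<le> n" for k
    using that
  proof (induction k)
    case 0
    then show ?case using n(2) by (simp add: cmult generator)
  next
    case (Suc k)
    then show ?case using n(2) by (simp add: add cmult generator)
  qed
  with n(1,3) show ?thesis by (cases n) auto
qed

lemma natext_linear_image_subset:
  assumes D: "coherent_D D" and gen: "\<And>f. f \<in> G \<union> gambles_pos \<Longrightarrow> L f \<in> D"
    and L_cmult: "\<And>f c. L (\<lambda>x. c * f x) = (\<lambda>y. c * L f y)"
    and L_add: "\<And>f h. L (\<lambda>x. f x + h x) = (\<lambda>y. L f y + L h y)"
  shows "L ` natext G \<subseteq> D"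
proof
  fix g assume "g \<in> L ` natext G"
  then obtain f where "f \<in> natext G" "g = L f" by blast
  from \<open>f \<in> natext G\<close> have "L f \<in> D"
    by (induction rule: natext_induct)
      (simp_all add: gen L_cmult L_add coherent_D_cmult[OF D] coherent_D_add[OF D])
  then show "g \<in> D" using \<open>g = L f\<close> by simp
qed

lemma natext_least:
  assumes "coherent_D D" "G \<subseteq> D"
  shows "natext G \<subseteq> D"
  using natext_linear_image_subset[where L = "\<lambda>f. f", OF assms(1)] assms coherent_D_pos by auto

lemma natext_ex_pos:
  assumes no_sure_loss: "\<And>I lam g. finite (I :: nat set) \<Longrightarrow> I \<noteq> {} \<Longrightarrow>
      \<forall>i\<in>I. 0 < lam i \<and> g i \<in> G \<Longrightarrow> \<exists>x. 0 < (\<Sum>i\<in>I. lam i * g i x)"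
    and "d \<in> natext G"
  shows "\<exists>x. 0 < d x"
proof -
  obtain n :: nat and lam fs where n: "1 \<le> n" "\<forall>i<n. 0 < lam i \<and> fs i \<in> G \<union> gambles_pos"
    "d = (\<lambda>x. \<Sum>i<n. lam i * fs i x)"
    using \<open>d \<in> natext G\<close> by (rule natextE)
  define I where "I = {i\<in>{..<n}. fs i \<in> G}"
  define J where "J = {..<n} - I"
  have J_pos: "\<forall>j\<in>J. fs j \<in> gambles_pos" using n(2) unfolding I_def J_def by auto
  have d_split: "d x = (\<Sum>i\<in>I. lam i * fs i x) + (\<Sum>j\<in>J. lam j * fs j x)" for x
  proof -
    have "{..<n} = I \<union> J" "I \<inter> J = {}" "finite I" "finite J" unfolding I_def J_def by auto
    then show ?thesis unfolding n(3) by (metis sum.union_disjoint)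
  qed
  have J_nonneg: "0 \<le> (\<Sum>j\<in>J. lam j * fs j x)" for x
    using J_pos n(2) unfolding J_def gambles_pos_def by (auto intro!: sum_nonneg)
  show ?thesis
  proof (cases "I = {}")
    case True
    then have "0 \<in> J" using n(1) unfolding J_def by auto
    then have "fs 0 \<in> gambles_pos" using J_pos by blast
    then obtain x where "0 < fs 0 x" by (rule gambles_pos_ex_pos)
    then have "0 < lam 0 * fs 0 x" using n(1,2) by simp
    also have "\<dots> \<le> (\<Sum>j\<in>J. lam j * fs j x)"
      using \<open>0 \<in> J\<close> J_pos n(2) unfolding J_def gambles_pos_def
      by (intro member_le_sum) auto
    finally show ?thesis using d_split True by auto
  next
    case False
    moreover have "finite I" "\<forall>i\<in>I. 0 < lam i \<and> fs i \<in> G" using n(2) unfolding I_def by auto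
    ultimately obtain x where "0 < (\<Sum>i\<in>I. lam i * fs i x)" using no_sure_loss by blast
    then show ?thesis using d_split J_nonneg by (metis add_pos_nonneg)
  qed
qed

lemma coherent_natextI:
  assumes G: "G \<subseteq> gambles"
    and no_sure_loss: "\<And>I lam g. finite (I :: nat set) \<Longrightarrow> I \<noteq> {} \<Longrightarrow>
      \<forall>i\<in>I. 0 < lam i \<and> g i \<in> G \<Longrightarrow> \<exists>x. 0 < (\<Sum>i\<in>I. lam i * g i x)"
  shows "coherent_D (natext G)"
  unfolding coherent_D_def
proof (intro conjI allI impI ballI subsetI)
  show "f \<in> gambles" if "f \<in> natext G" for f
    using that G by (induction rule: natext_induct)
      (auto simp: gambles_def gambles_pos_def intro: gamble_cmult gamble_add)
next
  fix f :: "'a \<Rightarrow> real" assume "gamble f \<and> (\<forall>x. 0 \<le> f x) \<and> f \<noteq> (\<lambda>x. 0)"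
  then show "f \<in> natext G" by (intro natext_generator) (simp add: gambles_pos_def)
next
  fix f :: "'a \<Rightarrow> real" assume "\<forall>x. f x \<le> 0"
  then show "f \<notin> natext G" using natext_ex_pos[of G f, OF no_sure_loss] by (meson not_le)
qed (simp_all add: natext_cmult natext_add)

lemma coherent_natext_subset:
  assumes D: "coherent_D D" and "G \<subseteq> D"
  shows "coherent_D (natext G)"
proof (rule coherent_natextI)
  show "G \<subseteq> gambles" using assms coherent_D_gamble by (auto simp: gambles_def)
next
  fix I :: "nat set" and lam :: "nat \<Rightarrow> real" and g
  assume "finite I" "I \<noteq> {}" "\<forall>i\<in>I. 0 < lam i \<and> g i \<in> G"
  then have "(\<lambda>x. \<Sum>i\<in>I. lam i * g i x) \<in> D"
    using \<open>G \<subseteq> D\<close> by (intro coherent_D_sum_pos[OF D]) auto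
  then show "\<exists>x. 0 < (\<Sum>i\<in>I. lam i * g i x)"
    using coherent_D_nonpos[OF D] by (meson not_le)
qed

lemma coherent_natext_insert_neg:
  assumes D: "coherent_D D" and g: "gamble g" "g \<notin> D" "g \<noteq> (\<lambda>x. 0)"
  shows "coherent_D (natext (insert (\<lambda>x. - g x) D))"
proof (rule coherent_natextI)
  show "insert (\<lambda>x. - g x) D \<subseteq> gambles"
    using g coherent_D_gamble[OF D] gamble_cmult[OF g(1), of "- 1"] by (auto simp: gambles_def)
next
  fix I :: "nat set" and lam :: "nat \<Rightarrow> real" and h
  assume "finite I" "I \<noteq> {}" and h: "\<forall>i\<in>I. 0 < lam i \<and> h i \<in> insert (\<lambda>x. - g x) D"
  define I0 where "I0 = {i\<in>I. h i = (\<lambda>x. - g x)}"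
  define I1 where "I1 = I - I0"
  define c where "c = (\<Sum>i\<in>I0. lam i)"
  define e where "e x = (\<Sum>i\<in>I1. lam i * h i x)" for x
  have "I0 \<subseteq> I" "I1 \<subseteq> I" unfolding I0_def I1_def by auto
  then have "finite I0" "finite I1" using \<open>finite I\<close> by (auto intro: finite_subset)
  have sum_eq: "(\<Sum>i\<in>I. lam i * h i x) = e x - c * g x" for x
  proof -
    have "I = I0 \<union> I1" "I0 \<inter> I1 = {}" using \<open>I0 \<subseteq> I\<close> unfolding I1_def by auto
    then have "(\<Sum>i\<in>I. lam i * h i x) = (\<Sum>i\<in>I0. lam i * h i x) + e x"
      unfolding e_def using \<open>finite I0\<close> \<open>finite I1\<close> by (simp add: sum.union_disjoint)
    then show ?thesis unfolding c_def I0_def by (simp add: sum_distrib_right sum_negf)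
  qed
  show "\<exists>x. 0 < (\<Sum>i\<in>I. lam i * h i x)"
  proof (cases "I1 = {}")
    case True
    then have "I0 = I" using \<open>I0 \<subseteq> I\<close> unfolding I1_def by blast
    then have "0 < c" unfolding c_def using h \<open>finite I\<close> \<open>I \<noteq> {}\<close> by (intro sum_pos) auto
    have "g \<notin> gambles_pos" using coherent_D_pos[OF D] g(2) by blast
    then obtain x where "g x < 0" using g(1,3) unfolding gambles_pos_def by (auto simp: not_le)
    then have "0 < e x - c * g x" using \<open>0 < c\<close> True by (simp add: e_def mult_pos_neg)
    then show ?thesis using sum_eq[of x] by (intro exI[of _ x]) simp
  next
    case False
    then have "e \<in> D"
      unfolding e_def using h \<open>finite I1\<close> unfolding I1_def I0_def
      by (intro coherent_D_sum_pos[OF D]) auto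
    moreover have "0 \<le> c" unfolding c_def using h \<open>I0 \<subseteq> I\<close> by (intro sum_nonneg) (auto dest: less_imp_le)
    ultimately obtain x where "c * g x < e x" using coherent_D_not_dominated[OF D g(1,2)] by blast
    then show ?thesis using sum_eq[of x] by (intro exI[of _ x]) simp
  qed
qed

text \<open>Fourier-Motzkin elimination of the row \<open>s\<close>: keep the columns that are nonnegative at \<open>s\<close> and
  add, for every pair of columns of opposite sign at \<open>s\<close>, the positive combination vanishing at \<open>s\<close>.\<close>

definition fm_columns :: "'r \<Rightarrow> ('r \<Rightarrow> real) set \<Rightarrow> ('r \<Rightarrow> real) set" where
  "fm_columns s Cols = {c \<in> Cols. 0 \<le> c s} \<union>
     {(\<lambda>r. c1 s * c2 r - c2 s * c1 r) | c1 c2. c1 \<in> Cols \<and> c2 \<in> Cols \<and> 0 < c1 s \<and> c2 s < 0}"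

lemma finite_fm_columns:
  assumes "finite Cols"
  shows "finite (fm_columns s Cols)"
proof -
  have "{(\<lambda>r. c1 s * c2 r - c2 s * c1 r) | c1 c2. c1 \<in> Cols \<and> c2 \<in> Cols \<and> 0 < c1 s \<and> c2 s < 0}
      \<subseteq> (\<lambda>(c1, c2) r. c1 s * c2 r - c2 s * c1 r) ` (Cols \<times> Cols)"
    by auto
  then have "finite {(\<lambda>r. c1 s * c2 r - c2 s * c1 r) | c1 c2.
      c1 \<in> Cols \<and> c2 \<in> Cols \<and> 0 < c1 s \<and> c2 s < 0}"
    by (rule finite_subset) (use assms in simp)
  then show ?thesis using assms unfolding fm_columns_def by simp
qed

lemma fm_columns_nonneg: "c \<in> fm_columns s Cols \<Longrightarrow> 0 \<le> c s"
  unfolding fm_columns_def by (auto simp: mult.commute)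

lemma fm_columns_combination:
  assumes "finite Cols" "c' \<in> fm_columns s Cols"
  shows "\<exists>k. semipositive_on Cols k \<and> (\<forall>r. c' r = (\<Sum>c\<in>Cols. k c * c r))"
  using assms(2) unfolding fm_columns_def
proof (elim UnE CollectE exE conjE)
  assume "c' \<in> Cols"
  have "(\<Sum>c\<in>Cols. (if c = c' then 1 else 0) * c r) = (\<Sum>c\<in>Cols. if c = c' then c' r else 0)" for r
    by (rule sum.cong) auto
  with \<open>c' \<in> Cols\<close> show ?thesis using assms(1)
    by (intro exI[of _ "\<lambda>c. if c = c' then 1 else 0"]) (auto simp: semipositive_on_def)
next
  fix c1 c2 assume c': "c' = (\<lambda>r. c1 s * c2 r - c2 s * c1 r)"
    and c12: "c1 \<in> Cols" "c2 \<in> Cols" "0 < c1 s" "c2 s < 0"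
  define k where "k c = (if c = c2 then c1 s else 0) + (if c = c1 then - c2 s else 0)" for c
  have "(\<Sum>c\<in>Cols. k c * c r)
      = (\<Sum>c\<in>Cols. if c = c2 then c1 s * c r else 0) + (\<Sum>c\<in>Cols. if c = c1 then - c2 s * c r else 0)"
    for r unfolding k_def distrib_right sum.distrib by (intro arg_cong2[where f = "(+)"] sum.cong) auto
  then have "(\<Sum>c\<in>Cols. k c * c r) = c1 s * c2 r - c2 s * c1 r" for r
    using assms(1) c12 by (simp add: sum.delta)
  moreover have "semipositive_on Cols k"
    using c12 unfolding semipositive_on_def k_def by (auto intro!: bexI[of _ c1])
  ultimately show ?thesis using c' by auto
qed

lemma semipositive_combination_trans:
  assumes "finite Cols" "finite Cols'"
    and comb: "\<forall>c'\<in>Cols'. \<exists>k. semipositive_on Cols k \<and> (\<forall>r. c' r = (\<Sum>c\<in>Cols. k c * c r))"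
    and v': "semipositive_on Cols' v'"
  shows "\<exists>v. semipositive_on Cols v \<and> (\<forall>r. (\<Sum>c\<in>Cols. v c * c r) = (\<Sum>c'\<in>Cols'. v' c' * c' r))"
proof -
  obtain k where k: "\<forall>c'\<in>Cols'. semipositive_on Cols (k c') \<and> (\<forall>r. c' r = (\<Sum>c\<in>Cols. k c' c * c r))"
    using bchoice[OF comb] by blast
  define v where "v c = (\<Sum>c'\<in>Cols'. v' c' * k c' c)" for c
  have "(\<Sum>c\<in>Cols. v c * c r) = (\<Sum>c'\<in>Cols'. v' c' * c' r)" for r
  proof -
    have "(\<Sum>c\<in>Cols. v c * c r) = (\<Sum>c'\<in>Cols'. v' c' * (\<Sum>c\<in>Cols. k c' c * c r))"
      unfolding v_def sum_distrib_right sum_distrib_left by (subst sum.swap) (simp add: mult.assoc)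
    also have "\<dots> = (\<Sum>c'\<in>Cols'. v' c' * c' r)"
      using k by (intro sum.cong) auto
    finally show ?thesis .
  qed
  moreover have "semipositive_on Cols v"
  proof -
    obtain c' where c': "c' \<in> Cols'" "0 < v' c'" using v' unfolding semipositive_on_def by blast
    then obtain c where c: "c \<in> Cols" "0 < k c' c" using k unfolding semipositive_on_def by blast
    have nonneg: "\<forall>c'\<in>Cols'. \<forall>c\<in>Cols. 0 \<le> v' c' * k c' c"
      using k v' unfolding semipositive_on_def by auto
    then have "v' c' * k c' c \<le> v c"
      unfolding v_def using c c' \<open>finite Cols'\<close> by (intro member_le_sum) auto
    moreover have "0 < v' c' * k c' c" using c c' by simp
    ultimately show ?thesis
      using nonneg c unfolding semipositive_on_def v_def by (auto intro!: sum_nonneg bexI[of _ c])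
  qed
  ultimately show ?thesis by blast
qed

lemma fm_threshold:
  fixes u :: "('r \<Rightarrow> real) \<Rightarrow> real"
  assumes "finite Cols"
    and nonneg: "\<And>c. c \<in> Cols \<Longrightarrow> 0 \<le> c s \<Longrightarrow> u c \<le> 0"
    and pair: "\<And>c1 c2. c1 \<in> Cols \<Longrightarrow> c2 \<in> Cols \<Longrightarrow> 0 < c1 s \<Longrightarrow> c2 s < 0 \<Longrightarrow> c1 s * u c2 \<le> c2 s * u c1"
  shows "\<exists>t\<ge>0. \<forall>c\<in>Cols. t * c s + u c \<le> 0"
proof -
  define t where "t = Max (insert 0 ((\<lambda>c. u c / - c s) ` {c\<in>Cols. c s < 0}))"
  have t_max: "u c / - c s \<le> t" if "c \<in> Cols" "c s < 0" for c
    unfolding t_def using \<open>finite Cols\<close> that by auto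
  have t_in: "t = 0 \<or> (\<exists>c\<in>Cols. c s < 0 \<and> t = u c / - c s)"
    unfolding t_def using Max_in[of "insert 0 ((\<lambda>c. u c / - c s) ` {c\<in>Cols. c s < 0})"] \<open>finite Cols\<close>
    by auto
  have "t * c s + u c \<le> 0" if c: "c \<in> Cols" for c
  proof (cases rule: linorder_cases[of "c s" 0])
    case less
    then have "u c \<le> t * - c s"
      using t_max[OF c less] pos_divide_le_eq[of "- c s" "u c" t] by simp
    then show ?thesis by simp
  next
    case equal
    then show ?thesis using nonneg c by simp
  next
    case greater
    from t_in show ?thesis
    proof (elim disjE bexE conjE)
      assume "t = 0"
      then show ?thesis using nonneg c greater by simp
    next
      fix c2 assume c2: "c2 \<in> Cols" "c2 s < 0" "t = u c2 / - c2 s"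
      then have "t * c2 s = - u c2" by (simp add: field_simps)
      have "(t * c s + u c) * - c2 s = - (c s * (t * c2 s)) - c2 s * u c"
        by (simp add: algebra_simps)
      also have "\<dots> = c s * u c2 - c2 s * u c"
        using \<open>t * c2 s = - u c2\<close> by simp
      also have "\<dots> \<le> 0" using pair[OF c c2(1) greater c2(2)] by simp
      finally show ?thesis using c2(2) by (simp add: mult_le_0_iff zero_le_mult_iff)
    qed
  qed
  moreover have "0 \<le> t" unfolding t_def using \<open>finite Cols\<close> by simp
  ultimately show ?thesis by blast
qed

lemma fm_dual_extension:
  assumes "finite Cols" "finite R" "s \<notin> R" and w': "semipositive_on R w'"
    and dual: "\<forall>c'\<in>fm_columns s Cols. (\<Sum>r\<in>R. w' r * c' r) \<le> 0"
  shows "\<exists>w. semipositive_on (insert s R) w \<and> (\<forall>c\<in>Cols. (\<Sum>r\<in>insert s R. w r * c r) \<le> 0)"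
proof -
  define u where "u c = (\<Sum>r\<in>R. w' r * c r)" for c
  have "\<exists>t\<ge>0. \<forall>c\<in>Cols. t * c s + u c \<le> 0"
  proof (rule fm_threshold[OF \<open>finite Cols\<close>])
    show "u c \<le> 0" if "c \<in> Cols" "0 \<le> c s" for c
      using dual that unfolding u_def fm_columns_def by auto
    show "c1 s * u c2 \<le> c2 s * u c1" if "c1 \<in> Cols" "c2 \<in> Cols" "0 < c1 s" "c2 s < 0" for c1 c2
    proof -
      have "(\<lambda>r. c1 s * c2 r - c2 s * c1 r) \<in> fm_columns s Cols"
        unfolding fm_columns_def using that by blast
      then have "(\<Sum>r\<in>R. w' r * (c1 s * c2 r - c2 s * c1 r)) \<le> 0"
        using bspec[OF dual] by simp
      then show ?thesis
        unfolding u_def by (simp add: right_diff_distrib sum_subtractf sum_distrib_left algebra_simps)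
    qed
  qed
  then obtain t where "0 \<le> t" "\<forall>c\<in>Cols. t * c s + u c \<le> 0" by blast
  moreover have "(\<Sum>r\<in>insert s R. (w'(s := t)) r * c r) = t * c s + u c" for c
  proof -
    have "(\<Sum>r\<in>R. (w'(s := t)) r * c r) = u c"
      unfolding u_def using \<open>s \<notin> R\<close> by (intro sum.cong) auto
    then show ?thesis using \<open>finite R\<close> \<open>s \<notin> R\<close> by simp
  qed
  moreover have "semipositive_on (insert s R) (w'(s := t))"
    using w' \<open>0 \<le> t\<close> \<open>s \<notin> R\<close> unfolding semipositive_on_def by auto
  ultimately show ?thesis by auto
qed

lemma semipositive_alternative:
  fixes R :: "'r set" and Cols :: "('r \<Rightarrow> real) set"
  assumes "finite R" "finite Cols" "R \<noteq> {} \<or> Cols \<noteq> {}"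
  shows "(\<exists>v. semipositive_on Cols v \<and> (\<forall>r\<in>R. 0 \<le> (\<Sum>c\<in>Cols. v c * c r)))
    \<or> (\<exists>w. semipositive_on R w \<and> (\<forall>c\<in>Cols. (\<Sum>r\<in>R. w r * c r) \<le> 0))"
  using assms
proof (induction R arbitrary: Cols rule: finite_induct)
  case empty
  then obtain c0 where "c0 \<in> Cols" by auto
  then have "semipositive_on Cols (\<lambda>c. if c = c0 then 1 else 0)"
    unfolding semipositive_on_def by auto
  then show ?case by auto
next
  case (insert s R)
  define Cols' where "Cols' = fm_columns s Cols"
  show ?case
  proof (cases "Cols' = {}")
    case True
    then have "\<forall>c\<in>Cols. c s < 0" unfolding Cols'_def fm_columns_def by force
    moreover have "(\<Sum>r\<in>insert s R. (if r = s then 1 else 0) * c r) = c s" for c :: "'r \<Rightarrow> real"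
    proof -
      have "(\<Sum>r\<in>R. (if r = s then 1 else 0) * c r) = 0"
        using insert(2) by (intro sum.neutral) auto
      then show ?thesis using insert(1,2) by simp
    qed
    moreover have "semipositive_on (insert s R) (\<lambda>r. if r = s then 1 else 0)"
      unfolding semipositive_on_def by auto
    ultimately show ?thesis by (intro disjI2 exI[of _ "\<lambda>r. if r = s then 1 else 0"]) auto
  next
    case False
    have "finite Cols'" unfolding Cols'_def using insert.prems(1) by (rule finite_fm_columns)
    then consider
        (primal) v' where "semipositive_on Cols' v'" "\<forall>r\<in>R. 0 \<le> (\<Sum>c'\<in>Cols'. v' c' * c' r)"
      | (dual) w' where "semipositive_on R w'" "\<forall>c'\<in>Cols'. (\<Sum>r\<in>R. w' r * c' r) \<le> 0"
      using insert.IH False by blast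
    then show ?thesis
    proof cases
      case primal
      then obtain v where v: "semipositive_on Cols v"
        "\<forall>r. (\<Sum>c\<in>Cols. v c * c r) = (\<Sum>c'\<in>Cols'. v' c' * c' r)"
        using semipositive_combination_trans[OF insert.prems(1) \<open>finite Cols'\<close>]
          fm_columns_combination[OF insert.prems(1)] unfolding Cols'_def by blast
      have "0 \<le> (\<Sum>c'\<in>Cols'. v' c' * c' s)"
        using primal(1) fm_columns_nonneg unfolding Cols'_def semipositive_on_def
        by (intro sum_nonneg mult_nonneg_nonneg) auto
      then show ?thesis using v primal(2) by auto
    next
      case dual
      then show ?thesis
        using fm_dual_extension[OF insert.prems(1) insert(1,2)] unfolding Cols'_def by blast
    qed
  qed
qed

lemma semipositive_alternative_indexed:
  fixes M :: "'r \<Rightarrow> 'k \<Rightarrow> real"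
  assumes "finite R" "finite K" "R \<noteq> {} \<or> K \<noteq> {}"
  shows "(\<exists>v. semipositive_on K v \<and> (\<forall>r\<in>R. 0 \<le> (\<Sum>k\<in>K. v k * M r k)))
    \<or> (\<exists>w. semipositive_on R w \<and> (\<forall>k\<in>K. (\<Sum>r\<in>R. w r * M r k) \<le> 0))"
proof -
  define col where "col k = (\<lambda>r. M r k)" for k
  consider (primal) v where "semipositive_on (col ` K) v" "\<forall>r\<in>R. 0 \<le> (\<Sum>c\<in>col ` K. v c * c r)"
    | (dual) w where "semipositive_on R w" "\<forall>c\<in>col ` K. (\<Sum>r\<in>R. w r * c r) \<le> 0"
    using semipositive_alternative[of R "col ` K"] assms by blast
  then show ?thesis
  proof cases
    case primal
    define n where "n c = card {k\<in>K. col k = c}" for c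
    define v' where "v' k = v (col k) / n (col k)" for k
    have n_pos: "0 < n (col k)" if "k \<in> K" for k
      unfolding n_def using assms(2) that by (auto simp: card_gt_0_iff)
    have "(\<Sum>k\<in>K. v' k * M r k) = (\<Sum>c\<in>col ` K. v c * c r)" for r
    proof -
      have "(\<Sum>k\<in>K. v' k * M r k) = (\<Sum>c\<in>col ` K. \<Sum>k\<in>{k\<in>K. col k = c}. v' k * M r k)"
        by (rule sum.image_gen[OF assms(2)])
      also have "\<dots> = (\<Sum>c\<in>col ` K. \<Sum>k\<in>{k\<in>K. col k = c}. v c / n c * c r)"
        unfolding v'_def col_def by (intro sum.cong refl) auto
      also have "\<dots> = (\<Sum>c\<in>col ` K. v c * c r)"
      proof (rule sum.cong[OF refl])
        fix c assume "c \<in> col ` K"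
        then have "0 < n c" using n_pos by blast
        then show "(\<Sum>k\<in>{k\<in>K. col k = c}. v c / n c * c r) = v c * c r"
          unfolding n_def by simp
      qed
      finally show ?thesis .
    qed
    moreover have "semipositive_on K v'"
      using primal(1) n_pos unfolding semipositive_on_def v'_def by (fastforce intro!: divide_pos_pos)
    ultimately show ?thesis using primal(2) by auto
  next
    case dual
    then show ?thesis unfolding col_def by auto
  qed
qed

lemma fibre_SUP_bounds:
  fixes \<sigma> :: "'a \<Rightarrow> 'r" and \<tau> :: "'b \<Rightarrow> 'k" and \<alpha> :: "'r \<Rightarrow> 'b \<Rightarrow> real" and \<beta> :: "'k \<Rightarrow> 'a \<Rightarrow> real"
  assumes nonpos: "\<forall>x1 x2. \<alpha> (\<sigma> x1) x2 + \<beta> (\<tau> x2) x1 \<le> 0"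
  shows "\<alpha> (\<sigma> x1) x2 \<le> (SUP y\<in>{y. \<tau> y = \<tau> x2}. \<alpha> (\<sigma> x1) y)"
    and "(SUP y\<in>{y. \<tau> y = \<tau> x2}. \<alpha> (\<sigma> x1) y) \<le> - \<beta> (\<tau> x2) x1"
proof -
  have bound: "\<alpha> (\<sigma> x1) y \<le> - \<beta> (\<tau> x2) x1" if "\<tau> y = \<tau> x2" for y
    using nonpos[rule_format, of x1 y] that by simp
  then have "bdd_above (\<alpha> (\<sigma> x1) ` {y. \<tau> y = \<tau> x2})"
    by (intro bdd_aboveI2[of _ _ "- \<beta> (\<tau> x2) x1"]) auto
  then show "\<alpha> (\<sigma> x1) x2 \<le> (SUP y\<in>{y. \<tau> y = \<tau> x2}. \<alpha> (\<sigma> x1) y)"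
    by (intro cSUP_upper) auto
  show "(SUP y\<in>{y. \<tau> y = \<tau> x2}. \<alpha> (\<sigma> x1) y) \<le> - \<beta> (\<tau> x2) x1"
    using bound by (intro cSUP_least) auto
qed

text \<open>Here \<open>\<sigma>\<close> and \<open>\<tau>\<close> group the points of the two factors; the groups outside \<open>R\<close> and \<open>K\<close>
  contribute nothing.\<close>

lemma atom_sum_nonpos_imp_empty:
  fixes \<sigma> :: "'a \<Rightarrow> 'r" and \<tau> :: "'b \<Rightarrow> 'k" and \<alpha> :: "'r \<Rightarrow> 'b \<Rightarrow> real" and \<beta> :: "'k \<Rightarrow> 'a \<Rightarrow> real"
  assumes D1: "coherent_D D1" and D2: "coherent_D D2" and "finite R" "finite K"
    and R: "R \<subseteq> range \<sigma>" "\<forall>r\<in>R. \<alpha> r \<in> D2" "\<forall>x1. \<sigma> x1 \<notin> R \<longrightarrow> \<alpha> (\<sigma> x1) = (\<lambda>_. 0)"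
    and K: "K \<subseteq> range \<tau>" "\<forall>k\<in>K. \<beta> k \<in> D1" "\<forall>x2. \<tau> x2 \<notin> K \<longrightarrow> \<beta> (\<tau> x2) = (\<lambda>_. 0)"
    and nonpos: "\<forall>x1 x2. \<alpha> (\<sigma> x1) x2 + \<beta> (\<tau> x2) x1 \<le> 0"
  shows "R = {} \<and> K = {}"
proof (rule ccontr)
  assume "\<not> (R = {} \<and> K = {})"
  define M where "M r k = (SUP y\<in>{y. \<tau> y = k}. \<alpha> r y)" for r k
  consider (primal) v where "semipositive_on K v" "\<forall>r\<in>R. 0 \<le> (\<Sum>k\<in>K. v k * M r k)"
    | (dual) w where "semipositive_on R w" "\<forall>k\<in>K. (\<Sum>r\<in>R. w r * M r k) \<le> 0"
    using semipositive_alternative_indexed[OF \<open>finite R\<close> \<open>finite K\<close>] \<open>\<not> (R = {} \<and> K = {})\<close>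
    by blast
  then show False
  proof cases
    case primal
    have "(\<Sum>k\<in>K. v k * \<beta> k x1) \<le> 0" for x1
    proof -
      have "0 \<le> (\<Sum>k\<in>K. v k * M (\<sigma> x1) k)"
      proof (cases "\<sigma> x1 \<in> R")
        case False
        then have "M (\<sigma> x1) k = 0" if "k \<in> K" for k
          using R(3) K(1) that unfolding M_def by (auto intro: cSUP_const)
        then show ?thesis by simp
      qed (use primal(2) in blast)
      also have "\<dots> \<le> (\<Sum>k\<in>K. v k * - \<beta> k x1)"
        using primal(1) K(1)
          fibre_SUP_bounds(2)[where \<alpha> = \<alpha> and \<sigma> = \<sigma> and \<beta> = \<beta> and \<tau> = \<tau>, OF nonpos, of x1]
        unfolding semipositive_on_def M_def by (intro sum_mono mult_left_mono) auto
      finally show ?thesis by (simp add: sum_negf)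
    qed
    moreover have "(\<lambda>x1. \<Sum>k\<in>K. v k * \<beta> k x1) \<in> D1"
      using coherent_D_sum[OF D1 \<open>finite K\<close> primal(1)] K(2) by blast
    ultimately show False using coherent_D_nonpos[OF D1, of "\<lambda>x1. \<Sum>k\<in>K. v k * \<beta> k x1"] by simp
  next
    case dual
    have "(\<Sum>r\<in>R. w r * \<alpha> r x2) \<le> 0" for x2
    proof (cases "\<tau> x2 \<in> K")
      case True
      have "(\<Sum>r\<in>R. w r * \<alpha> r x2) \<le> (\<Sum>r\<in>R. w r * M r (\<tau> x2))"
        using dual(1) R(1)
          fibre_SUP_bounds(1)[where \<alpha> = \<alpha> and \<sigma> = \<sigma> and \<beta> = \<beta> and \<tau> = \<tau>, OF nonpos, of _ x2]
        unfolding semipositive_on_def M_def by (intro sum_mono mult_left_mono) auto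
      also have "\<dots> \<le> 0" using dual(2) True by blast
      finally show ?thesis .
    next
      case False
      have "\<alpha> r x2 \<le> 0" if "r \<in> R" for r
      proof -
        obtain x1 where "\<sigma> x1 = r" using R(1) \<open>r \<in> R\<close> by blast
        then show ?thesis using nonpos[rule_format, of x1 x2] K(3) False by simp
      qed
      then show ?thesis
        using dual(1) unfolding semipositive_on_def by (intro sum_nonpos mult_nonneg_nonpos) auto
    qed
    moreover have "(\<lambda>x2. \<Sum>r\<in>R. w r * \<alpha> r x2) \<in> D2"
      using coherent_D_sum[OF D2 \<open>finite R\<close> dual(1)] R(2) by blast
    ultimately show False using coherent_D_nonpos[OF D2, of "\<lambda>x2. \<Sum>r\<in>R. w r * \<alpha> r x2"] by simp
  qed
qed

lemma coherent_D_sum_nonempty: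
  "coherent_D D \<Longrightarrow> finite K \<Longrightarrow> K \<noteq> {} \<Longrightarrow> \<forall>k\<in>K. f k \<in> D \<Longrightarrow> (\<lambda>x. \<Sum>k\<in>K. f k x) \<in> D"
  using coherent_D_sum_pos[of D K "\<lambda>_. 1" f] by simp

lemma product_combination_ex_pos:
  fixes a :: "'i \<Rightarrow> 'b \<Rightarrow> real" and E1 :: "'i \<Rightarrow> 'a set"
    and b :: "'j \<Rightarrow> 'a \<Rightarrow> real" and E2 :: "'j \<Rightarrow> 'b set"
  assumes D1: "coherent_D D1" and D2: "coherent_D D2" and "finite I" "finite J" "I \<noteq> {} \<or> J \<noteq> {}"
    and I: "\<forall>i\<in>I. a i \<in> D2 \<and> E1 i \<noteq> {}" and J: "\<forall>j\<in>J. b j \<in> D1 \<and> E2 j \<noteq> {}"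
  shows "\<exists>x1 x2. 0 < (\<Sum>i\<in>I. a i x2 * indicator (E1 i) x1) + (\<Sum>j\<in>J. b j x1 * indicator (E2 j) x2)"
proof (rule ccontr)
  assume "\<not> ?thesis"
  then have nonpos: "\<forall>x1 x2. (\<Sum>i\<in>I. a i x2 * indicator (E1 i) x1)
      + (\<Sum>j\<in>J. b j x1 * indicator (E2 j) x2) \<le> 0"
    by (simp add: not_less)
  define \<sigma> where "\<sigma> x1 = {i\<in>I. x1 \<in> E1 i}" for x1
  define \<tau> where "\<tau> x2 = {j\<in>J. x2 \<in> E2 j}" for x2
  define \<alpha> where "\<alpha> S x2 = (\<Sum>i\<in>S. a i x2)" for S x2
  define \<beta> where "\<beta> T x1 = (\<Sum>j\<in>T. b j x1)" for T x1
  have "(\<Sum>i\<in>I. a i x2 * indicator (E1 i) x1) = \<alpha> (\<sigma> x1) x2" for x1 x2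
    unfolding \<alpha>_def \<sigma>_def using \<open>finite I\<close> by (simp add: sum.inter_filter sum.inter_restrict indicator_def)
  moreover have "(\<Sum>j\<in>J. b j x1 * indicator (E2 j) x2) = \<beta> (\<tau> x2) x1" for x1 x2
    unfolding \<beta>_def \<tau>_def using \<open>finite J\<close> by (simp add: sum.inter_filter sum.inter_restrict indicator_def)
  ultimately have "range \<sigma> - {{}} = {} \<and> range \<tau> - {{}} = {}"
    using nonpos
  proof (intro atom_sum_nonpos_imp_empty[OF D1 D2])
    show "finite (range \<sigma> - {{}})"
      by (rule finite_subset[of _ "Pow I"]) (auto simp: \<sigma>_def \<open>finite I\<close>)
    show "finite (range \<tau> - {{}})"
      by (rule finite_subset[of _ "Pow J"]) (auto simp: \<tau>_def \<open>finite J\<close>)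
    show "\<forall>S\<in>range \<sigma> - {{}}. \<alpha> S \<in> D2"
      using I \<open>finite I\<close> unfolding \<alpha>_def \<sigma>_def
      by (auto intro!: coherent_D_sum_nonempty[OF D2] intro: finite_subset)
    show "\<forall>T\<in>range \<tau> - {{}}. \<beta> T \<in> D1"
      using J \<open>finite J\<close> unfolding \<beta>_def \<tau>_def
      by (auto intro!: coherent_D_sum_nonempty[OF D1] intro: finite_subset)
    show "\<forall>x1. \<sigma> x1 \<notin> range \<sigma> - {{}} \<longrightarrow> \<alpha> (\<sigma> x1) = (\<lambda>_. 0)"
      "\<forall>x2. \<tau> x2 \<notin> range \<tau> - {{}} \<longrightarrow> \<beta> (\<tau> x2) = (\<lambda>_. 0)"
      by (simp_all add: \<alpha>_def \<beta>_def fun_eq_iff)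
  qed auto
  moreover have "\<sigma> x1 \<in> range \<sigma> - {{}}" if "i \<in> I" "x1 \<in> E1 i" for i x1
    using that unfolding \<sigma>_def by blast
  moreover have "\<tau> x2 \<in> range \<tau> - {{}}" if "j \<in> J" "x2 \<in> E2 j" for j x2
    using that unfolding \<tau>_def by blast
  ultimately show False using I J \<open>I \<noteq> {} \<or> J \<noteq> {}\<close> by (metis all_not_in_conv empty_iff)
qed

definition prod_generators :: "'a set set \<Rightarrow> 'b set set \<Rightarrow> ('a \<Rightarrow> real) set \<Rightarrow> ('b \<Rightarrow> real) set
    \<Rightarrow> ('a \<times> 'b \<Rightarrow> real) set" where
  "prod_generators BB1 BB2 D1 D2 =
     {(\<lambda>p. f2 (snd p) * indicator B1 (fst p)) | f2 B1. f2 \<in> D2 \<and> B1 \<in> BB1 \<union> {UNIV}}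
   \<union> {(\<lambda>p. f1 (fst p) * indicator B2 (snd p)) | f1 B2. f1 \<in> D1 \<and> B2 \<in> BB2 \<union> {UNIV}}"

lemma D_prod_eq_natext: "D_prod BB1 BB2 D1 D2 = natext (prod_generators BB1 BB2 D1 D2)"
  unfolding D_prod_def prod_generators_def by (intro arg_cong[of _ _ natext]) auto

lemma prod_generatorsE:
  assumes "g \<in> prod_generators BB1 BB2 D1 D2"
  obtains (snd) f2 B1 where "f2 \<in> D2" "B1 \<in> BB1 \<union> {UNIV}" "g = (\<lambda>p. f2 (snd p) * indicator B1 (fst p))"
    | (fst) f1 B2 where "f1 \<in> D1" "B2 \<in> BB2 \<union> {UNIV}" "g = (\<lambda>p. f1 (fst p) * indicator B2 (snd p))"
  using assms unfolding prod_generators_def by blast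

lemma prod_generators_gambles:
  assumes "coherent_D D1" "coherent_D D2"
  shows "prod_generators BB1 BB2 D1 D2 \<subseteq> gambles"
proof
  fix g assume "g \<in> prod_generators BB1 BB2 D1 D2"
  then show "g \<in> gambles"
    by (cases rule: prod_generatorsE) (simp_all add: gambles_def gamble_mult_indicator gamble_comp
        coherent_D_gamble[OF assms(1)] coherent_D_gamble[OF assms(2)])
qed

lemma prod_generators_cmult:
  assumes "coherent_D D1" "coherent_D D2" "g \<in> prod_generators BB1 BB2 D1 D2" "0 < c"
  shows "(\<lambda>x. c * g x) \<in> prod_generators BB1 BB2 D1 D2"
  using assms(3)
proof (cases rule: prod_generatorsE)
  case (snd f2 B1)
  then have "(\<lambda>x. c * f2 x) \<in> D2" using coherent_D_cmult[OF assms(2)] \<open>0 < c\<close> by blast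
  then show ?thesis using snd unfolding prod_generators_def
    by (intro UnI1 CollectI exI[of _ "\<lambda>x. c * f2 x"] exI[of _ B1]) (simp add: fun_eq_iff mult.assoc)
next
  case (fst f1 B2)
  then have "(\<lambda>x. c * f1 x) \<in> D1" using coherent_D_cmult[OF assms(1)] \<open>0 < c\<close> by blast
  then show ?thesis using fst unfolding prod_generators_def
    by (intro UnI2 CollectI exI[of _ "\<lambda>x. c * f1 x"] exI[of _ B2]) (simp add: fun_eq_iff mult.assoc)
qed

lemma sum_prod_generators_decompose:
  assumes "finite I" and g: "\<forall>i\<in>I. g i \<in> prod_generators BB1 BB2 D1 D2"
  obtains I1 I2 a E1 b E2 where "I = I1 \<union> I2"
    "\<forall>i\<in>I1. a i \<in> D2 \<and> E1 i \<in> BB1 \<union> {UNIV}" "\<forall>j\<in>I2. b j \<in> D1 \<and> E2 j \<in> BB2 \<union> {UNIV}"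
    "\<And>x1 x2. (\<Sum>i\<in>I. g i (x1, x2))
      = (\<Sum>i\<in>I1. a i x2 * indicator (E1 i) x1) + (\<Sum>j\<in>I2. b j x1 * indicator (E2 j) x2)"
proof -
  define I1 where "I1 = {i\<in>I. \<exists>f2 B1. f2 \<in> D2 \<and> B1 \<in> BB1 \<union> {UNIV}
    \<and> g i = (\<lambda>p. f2 (snd p) * indicator B1 (fst p))}"
  define I2 where "I2 = I - I1"
  have "\<forall>i\<in>I1. \<exists>f2 B1. f2 \<in> D2 \<and> B1 \<in> BB1 \<union> {UNIV} \<and> g i = (\<lambda>p. f2 (snd p) * indicator B1 (fst p))"
    unfolding I1_def by blast
  then obtain a E1 where a: "\<forall>i\<in>I1. a i \<in> D2 \<and> E1 i \<in> BB1 \<union> {UNIV}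
      \<and> g i = (\<lambda>p. a i (snd p) * indicator (E1 i) (fst p))"
    by metis
  have "\<forall>j\<in>I2. \<exists>f1 B2. f1 \<in> D1 \<and> B2 \<in> BB2 \<union> {UNIV} \<and> g j = (\<lambda>p. f1 (fst p) * indicator B2 (snd p))"
  proof
    fix j assume "j \<in> I2"
    then have "g j \<in> prod_generators BB1 BB2 D1 D2" "j \<notin> I1" "j \<in> I" using g unfolding I2_def by auto
    then show "\<exists>f1 B2. f1 \<in> D1 \<and> B2 \<in> BB2 \<union> {UNIV} \<and> g j = (\<lambda>p. f1 (fst p) * indicator B2 (snd p))"
      by (cases rule: prod_generatorsE) (auto simp: I1_def)
  qed
  then obtain b E2 where b: "\<forall>j\<in>I2. b j \<in> D1 \<and> E2 j \<in> BB2 \<union> {UNIV}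
      \<and> g j = (\<lambda>p. b j (fst p) * indicator (E2 j) (snd p))"
    by metis
  have "I = I1 \<union> I2" "I1 \<inter> I2 = {}" "finite I1" "finite I2"
    using \<open>finite I\<close> unfolding I1_def I2_def by auto
  then have "(\<Sum>i\<in>I. g i (x1, x2)) = (\<Sum>i\<in>I1. g i (x1, x2)) + (\<Sum>j\<in>I2. g j (x1, x2))" for x1 x2
    by (simp add: sum.union_disjoint)
  also have "\<dots> x1 x2 = (\<Sum>i\<in>I1. a i x2 * indicator (E1 i) x1) + (\<Sum>j\<in>I2. b j x1 * indicator (E2 j) x2)"
    for x1 x2 using a b by (intro arg_cong2[where f = "(+)"] sum.cong) auto
  finally show ?thesis using a b \<open>I = I1 \<union> I2\<close> by (intro that) auto
qed

lemma coherent_D_prod: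
  assumes D1: "coherent_D D1" and D2: "coherent_D D2" and "{} \<notin> BB1" "{} \<notin> BB2"
  shows "coherent_D (D_prod BB1 BB2 D1 D2)"
  unfolding D_prod_eq_natext
proof (rule coherent_natextI[OF prod_generators_gambles[OF D1 D2]])
  fix I :: "nat set" and lam :: "nat \<Rightarrow> real" and g
  assume "finite I" "I \<noteq> {}" and g: "\<forall>i\<in>I. 0 < lam i \<and> g i \<in> prod_generators BB1 BB2 D1 D2"
  then have "\<forall>i\<in>I. (\<lambda>x. lam i * g i x) \<in> prod_generators BB1 BB2 D1 D2"
    using prod_generators_cmult[OF D1 D2] by blast
  then obtain I1 I2 a E1 b E2 where I: "I = I1 \<union> I2"
    and a: "\<forall>i\<in>I1. a i \<in> D2 \<and> E1 i \<in> BB1 \<union> {UNIV}" and b: "\<forall>j\<in>I2. b j \<in> D1 \<and> E2 j \<in> BB2 \<union> {UNIV}"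
    and sum_eq: "\<And>x1 x2. (\<Sum>i\<in>I. lam i * g i (x1, x2))
      = (\<Sum>i\<in>I1. a i x2 * indicator (E1 i) x1) + (\<Sum>j\<in>I2. b j x1 * indicator (E2 j) x2)"
    by (rule sum_prod_generators_decompose[OF \<open>finite I\<close>]) blast
  have "\<exists>x1 x2. 0 < (\<Sum>i\<in>I1. a i x2 * indicator (E1 i) x1) + (\<Sum>j\<in>I2. b j x1 * indicator (E2 j) x2)"
  proof (rule product_combination_ex_pos[OF D1 D2])
    show "finite I1" "finite I2" "I1 \<noteq> {} \<or> I2 \<noteq> {}" using \<open>finite I\<close> \<open>I \<noteq> {}\<close> I by auto
    show "\<forall>i\<in>I1. a i \<in> D2 \<and> E1 i \<noteq> {}" using a assms(3) by auto
    show "\<forall>j\<in>I2. b j \<in> D1 \<and> E2 j \<noteq> {}" using b assms(4) by auto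
  qed
  then show "\<exists>x. 0 < (\<Sum>i\<in>I. lam i * g i x)" unfolding sum_eq[symmetric] by blast
qed

lemma D_prod_generator_fst:
  "f1 \<in> D1 \<Longrightarrow> B2 \<in> BB2 \<union> {UNIV} \<Longrightarrow> (\<lambda>p. f1 (fst p) * indicator B2 (snd p)) \<in> D_prod BB1 BB2 D1 D2"
  unfolding D_prod_def by (rule natext_generator) blast

lemma D_prod_generator_snd:
  "f2 \<in> D2 \<Longrightarrow> B1 \<in> BB1 \<union> {UNIV} \<Longrightarrow> (\<lambda>p. f2 (snd p) * indicator B1 (fst p)) \<in> D_prod BB1 BB2 D1 D2"
  unfolding D_prod_def by (rule natext_generator) blast

lemma D_prod_mono: "D1 \<subseteq> D1' \<Longrightarrow> D2 \<subseteq> D2' \<Longrightarrow> D_prod BB1 BB2 D1 D2 \<subseteq> D_prod BB1 BB2 D1' D2'"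
  unfolding D_prod_def by (rule natext_mono) blast

lemma lift_fst_mem_D_prod_iff:
  assumes D1: "coherent_D D1" and D2: "coherent_D D2" and "{} \<notin> BB1" "{} \<notin> BB2"
    and B2: "B2 \<in> BB2 \<union> {UNIV}"
  shows "(\<lambda>p. g (fst p) * indicator B2 (snd p)) \<in> D_prod BB1 BB2 D1 D2 \<longleftrightarrow> g \<in> D1"
proof
  assume lift: "(\<lambda>p. g (fst p) * indicator B2 (snd p)) \<in> D_prod BB1 BB2 D1 D2"
  have coh: "coherent_D (D_prod BB1 BB2 D1 D2)" using coherent_D_prod[OF D1 D2 assms(3,4)] .
  show "g \<in> D1"
  proof (rule ccontr)
    assume "g \<notin> D1"
    have "B2 \<noteq> {}" using B2 assms(4) by auto
    then obtain y where "y \<in> B2" by blast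
    then have "gamble g"
      using gamble_comp[OF coherent_D_gamble[OF coh lift], of "\<lambda>x. (x, y)"] by simp
    have "g \<noteq> (\<lambda>x. 0)" using lift coherent_D_nonpos[OF coh] by auto
    define D1' where "D1' = natext (insert (\<lambda>x. - g x) D1)"
    have "coherent_D D1'"
      unfolding D1'_def by (rule coherent_natext_insert_neg[OF D1 \<open>gamble g\<close> \<open>g \<notin> D1\<close> \<open>g \<noteq> (\<lambda>x. 0)\<close>])
    then have coh': "coherent_D (D_prod BB1 BB2 D1' D2)"
      by (rule coherent_D_prod[OF _ D2 assms(3,4)])
    have "D1 \<subseteq> D1'" "(\<lambda>x. - g x) \<in> D1'" unfolding D1'_def by (auto intro: natext_generator)
    then have "(\<lambda>p. g (fst p) * indicator B2 (snd p)) \<in> D_prod BB1 BB2 D1' D2"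
      "(\<lambda>p. - g (fst p) * indicator B2 (snd p)) \<in> D_prod BB1 BB2 D1' D2"
      using D_prod_mono[of D1 D1' D2 D2] lift D_prod_generator_fst[OF _ B2, of "\<lambda>x. - g x"] by auto
    from coherent_D_add[OF coh' this] show False
      using coherent_D_nonpos[OF coh'] by auto
  qed
qed (rule D_prod_generator_fst[OF _ B2])

lemma lift_snd_mem_D_prod_iff:
  assumes D1: "coherent_D D1" and D2: "coherent_D D2" and "{} \<notin> BB1" "{} \<notin> BB2"
    and B1: "B1 \<in> BB1 \<union> {UNIV}"
  shows "(\<lambda>p. g (snd p) * indicator B1 (fst p)) \<in> D_prod BB1 BB2 D1 D2 \<longleftrightarrow> g \<in> D2"
proof
  assume lift: "(\<lambda>p. g (snd p) * indicator B1 (fst p)) \<in> D_prod BB1 BB2 D1 D2"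
  have coh: "coherent_D (D_prod BB1 BB2 D1 D2)" using coherent_D_prod[OF D1 D2 assms(3,4)] .
  show "g \<in> D2"
  proof (rule ccontr)
    assume "g \<notin> D2"
    have "B1 \<noteq> {}" using B1 assms(3) by auto
    then obtain y where "y \<in> B1" by blast
    then have "gamble g"
      using gamble_comp[OF coherent_D_gamble[OF coh lift], of "\<lambda>x. (y, x)"] by simp
    have "g \<noteq> (\<lambda>x. 0)" using lift coherent_D_nonpos[OF coh] by auto
    define D2' where "D2' = natext (insert (\<lambda>x. - g x) D2)"
    have "coherent_D D2'"
      unfolding D2'_def by (rule coherent_natext_insert_neg[OF D2 \<open>gamble g\<close> \<open>g \<notin> D2\<close> \<open>g \<noteq> (\<lambda>x. 0)\<close>])
    then have coh': "coherent_D (D_prod BB1 BB2 D1 D2')"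
      by (rule coherent_D_prod[OF D1 _ assms(3,4)])
    have "D2 \<subseteq> D2'" "(\<lambda>x. - g x) \<in> D2'" unfolding D2'_def by (auto intro: natext_generator)
    then have "(\<lambda>p. g (snd p) * indicator B1 (fst p)) \<in> D_prod BB1 BB2 D1 D2'"
      "(\<lambda>p. - g (snd p) * indicator B1 (fst p)) \<in> D_prod BB1 BB2 D1 D2'"
      using D_prod_mono[of D1 D1 D2 D2'] lift D_prod_generator_snd[OF _ B1, of "\<lambda>x. - g x"] by auto
    from coherent_D_add[OF coh' this] show False
      using coherent_D_nonpos[OF coh'] by auto
  qed
qed (rule D_prod_generator_snd[OF _ B1])

lemma cyl1_shift_indicator:
  "(\<lambda>x. (cyl1 f x - mu) * indicator (B1 \<times> B2) x)
    = (\<lambda>p. (\<lambda>x. (f x - mu) * indicator B1 x) (fst p) * indicator B2 (snd p))"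
  by (auto simp: cyl1_def indicator_times fun_eq_iff)

lemma cyl2_shift_indicator:
  "(\<lambda>x. (cyl2 f x - mu) * indicator (B1 \<times> B2) x)
    = (\<lambda>p. (\<lambda>x. (f x - mu) * indicator B2 x) (snd p) * indicator B1 (fst p))"
  by (auto simp: cyl2_def indicator_times fun_eq_iff)

lemma lowprev_D_prod_cyl1:
  assumes "coherent_D D1" "coherent_D D2" "{} \<notin> BB1" "{} \<notin> BB2" "B2 \<in> BB2 \<union> {UNIV}"
  shows "lowprev_D (D_prod BB1 BB2 D1 D2) (cyl1 f) (B1 \<times> B2) = lowprev_D D1 f B1"
proof -
  have "(\<lambda>x. (cyl1 f x - mu) * indicator (B1 \<times> B2) x) \<in> D_prod BB1 BB2 D1 D2
      \<longleftrightarrow> (\<lambda>x. (f x - mu) * indicator B1 x) \<in> D1" for mu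
    unfolding cyl1_shift_indicator by (rule lift_fst_mem_D_prod_iff[OF assms])
  then show ?thesis unfolding lowprev_D_def by simp
qed

lemma lowprev_D_prod_cyl2:
  assumes "coherent_D D1" "coherent_D D2" "{} \<notin> BB1" "{} \<notin> BB2" "B1 \<in> BB1 \<union> {UNIV}"
  shows "lowprev_D (D_prod BB1 BB2 D1 D2) (cyl2 f) (B1 \<times> B2) = lowprev_D D2 f B2"
proof -
  have "(\<lambda>x. (cyl2 f x - mu) * indicator (B1 \<times> B2) x) \<in> D_prod BB1 BB2 D1 D2
      \<longleftrightarrow> (\<lambda>x. (f x - mu) * indicator B2 x) \<in> D2" for mu
    unfolding cyl2_shift_indicator by (rule lift_snd_mem_D_prod_iff[OF assms])
  then show ?thesis unfolding lowprev_D_def by simp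
qed

lemma lowprev_D_mono: "D \<subseteq> D' \<Longrightarrow> lowprev_D D f B \<le> lowprev_D D' f B"
  unfolding lowprev_D_def by (rule Sup_subset_mono) blast

lemma lowprev_D_less_imp_mem:
  assumes D: "coherent_D D" and "gamble f" and "ereal mu < lowprev_D D f B"
  shows "(\<lambda>x. (f x - mu) * indicator B x) \<in> D"
proof -
  obtain mu' where "mu < mu'" "(\<lambda>x. (f x - mu') * indicator B x) \<in> D"
    using assms(3) unfolding lowprev_D_def less_Sup_iff by auto
  from this(2) show ?thesis
    by (rule coherent_D_upward_closed[OF D _ gamble_shift_indicator[OF \<open>gamble f\<close>]])
      (simp add: indicator_def less_imp_le[OF \<open>mu < mu'\<close>])
qed

lemma A_lp_subset:
  assumes D: "coherent_D D" and "C \<subseteq> cond_pairs" and "\<forall>(f, B)\<in>C. P f B \<le> lowprev_D D f B"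
  shows "A_lp C P \<subseteq> D"
proof
  fix g assume "g \<in> A_lp C P"
  then obtain f B mu where "(f, B) \<in> C" "ereal mu < P f B" "g = (\<lambda>x. (f x - mu) * indicator B x)"
    unfolding A_lp_def by blast
  moreover have "gamble f" using \<open>(f, B) \<in> C\<close> assms(2) by (auto simp: cond_pairs_def gambles_def)
  ultimately show "g \<in> D"
    using assms(3) lowprev_D_less_imp_mem[OF D] by fastforce
qed

lemma lowprev_E_lp_ge: "(f, B) \<in> C \<Longrightarrow> P f B \<le> lowprev_D (E_lp C P) f B"
proof (rule dense_le)
  fix y assume "(f, B) \<in> C" "y < P f B"
  then show "y \<le> lowprev_D (E_lp C P) f B"
  proof (cases y)
    case (real mu)
    with \<open>(f, B) \<in> C\<close> \<open>y < P f B\<close> have "(\<lambda>x. (f x - mu) * indicator B x) \<in> E_lp C P"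
      unfolding E_lp_def A_lp_def by (intro natext_generator) blast
    then show ?thesis unfolding lowprev_D_def real by (intro Sup_upper) blast
  qed auto
qed

lemma
  assumes "coherent_lp C P"
  shows coherent_E_lp: "coherent_D (E_lp C P)"
    and lowprev_E_lp: "(f, B) \<in> C \<Longrightarrow> lowprev_D (E_lp C P) f B = P f B"
proof -
  obtain D where D: "coherent_D D" "C \<subseteq> cond_pairs" "\<forall>(f, B)\<in>C. P f B = lowprev_D D f B"
    using assms unfolding coherent_lp_def by blast
  then have "A_lp C P \<subseteq> D" by (intro A_lp_subset) auto
  then show "coherent_D (E_lp C P)"
    unfolding E_lp_def using D(1) by (rule coherent_natext_subset[rotated])
  have "E_lp C P \<subseteq> D" unfolding E_lp_def using D(1) \<open>A_lp C P \<subseteq> D\<close> by (rule natext_least)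
  show "lowprev_D (E_lp C P) f B = P f B" if "(f, B) \<in> C"
  proof (rule order.antisym)
    have "lowprev_D (E_lp C P) f B \<le> lowprev_D D f B"
      using \<open>E_lp C P \<subseteq> D\<close> by (rule lowprev_D_mono)
    then show "lowprev_D (E_lp C P) f B \<le> P f B" using D(3) that by auto
    show "P f B \<le> lowprev_D (E_lp C P) f B" using that by (rule lowprev_E_lp_ge)
  qed
qed

lemma lift_fst_gambles_pos:
  assumes "f \<in> gambles_pos" "B \<noteq> {}"
  shows "(\<lambda>p. f (fst p) * indicator B (snd p)) \<in> gambles_pos"
proof -
  obtain x where "0 < f x" using assms(1) by (rule gambles_pos_ex_pos)
  obtain y where "y \<in> B" using assms(2) by blast
  have "(\<lambda>p. f (fst p) * indicator B (snd p)) \<noteq> (\<lambda>p. 0)"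
  proof
    assume "(\<lambda>p. f (fst p) * indicator B (snd p)) = (\<lambda>p. 0)"
    from fun_cong[OF this, of "(x, y)"] show False using \<open>0 < f x\<close> \<open>y \<in> B\<close> by simp
  qed
  then show ?thesis
    using assms(1) unfolding gambles_pos_def by (auto intro: gamble_mult_indicator gamble_comp)
qed

lemma lift_snd_gambles_pos:
  assumes "f \<in> gambles_pos" "B \<noteq> {}"
  shows "(\<lambda>p. f (snd p) * indicator B (fst p)) \<in> gambles_pos"
proof -
  obtain x where "0 < f x" using assms(1) by (rule gambles_pos_ex_pos)
  obtain y where "y \<in> B" using assms(2) by blast
  have "(\<lambda>p. f (snd p) * indicator B (fst p)) \<noteq> (\<lambda>p. 0)"
  proof
    assume "(\<lambda>p. f (snd p) * indicator B (fst p)) = (\<lambda>p. 0)"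
    from fun_cong[OF this, of "(y, x)"] show False using \<open>0 < f x\<close> \<open>y \<in> B\<close> by simp
  qed
  then show ?thesis
    using assms(1) unfolding gambles_pos_def by (auto intro: gamble_mult_indicator gamble_comp)
qed

lemma lift_fst_E_lp_mem:
  assumes D: "coherent_D D" and "B2 \<noteq> {}" and "C1 \<subseteq> cond_pairs"
    and le: "\<forall>(f, B)\<in>C1. P1 f B \<le> lowprev_D D (cyl1 f) (B \<times> B2)"
    and "g \<in> E_lp C1 P1"
  shows "(\<lambda>p. g (fst p) * indicator B2 (snd p)) \<in> D"
proof -
  have "(\<lambda>g p. g (fst p) * indicator B2 (snd p)) ` natext (A_lp C1 P1) \<subseteq> D"
  proof (rule natext_linear_image_subset[OF D])
    fix f assume "f \<in> A_lp C1 P1 \<union> gambles_pos"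
    then show "(\<lambda>p. f (fst p) * indicator B2 (snd p)) \<in> D"
    proof
      assume "f \<in> A_lp C1 P1"
      then obtain h B mu where hB: "(h, B) \<in> C1" "ereal mu < P1 h B"
        and f: "f = (\<lambda>x. (h x - mu) * indicator B x)"
        unfolding A_lp_def by blast
      have "gamble (cyl1 h :: 'a \<times> 'b \<Rightarrow> real)"
        using hB(1) \<open>C1 \<subseteq> cond_pairs\<close> by (auto simp: cond_pairs_def gambles_def cyl1_def intro: gamble_comp)
      moreover have "ereal mu < lowprev_D D (cyl1 h) (B \<times> B2)" using hB le by fastforce
      ultimately have "(\<lambda>x. (cyl1 h x - mu) * indicator (B \<times> B2) x) \<in> D"
        by (rule lowprev_D_less_imp_mem[OF D])
      then show ?thesis unfolding cyl1_shift_indicator f .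
    next
      assume "f \<in> gambles_pos"
      then show ?thesis using lift_fst_gambles_pos \<open>B2 \<noteq> {}\<close> coherent_D_pos[OF D] by blast
    qed
  qed (simp_all add: fun_eq_iff algebra_simps)
  then show ?thesis using assms(5) unfolding E_lp_def by blast
qed

lemma lift_snd_E_lp_mem:
  assumes D: "coherent_D D" and "B1 \<noteq> {}" and "C2 \<subseteq> cond_pairs"
    and le: "\<forall>(f, B)\<in>C2. P2 f B \<le> lowprev_D D (cyl2 f) (B1 \<times> B)"
    and "g \<in> E_lp C2 P2"
  shows "(\<lambda>p. g (snd p) * indicator B1 (fst p)) \<in> D"
proof -
  have "(\<lambda>g p. g (snd p) * indicator B1 (fst p)) ` natext (A_lp C2 P2) \<subseteq> D"
  proof (rule natext_linear_image_subset[OF D])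
    fix f assume "f \<in> A_lp C2 P2 \<union> gambles_pos"
    then show "(\<lambda>p. f (snd p) * indicator B1 (fst p)) \<in> D"
    proof
      assume "f \<in> A_lp C2 P2"
      then obtain h B mu where hB: "(h, B) \<in> C2" "ereal mu < P2 h B"
        and f: "f = (\<lambda>x. (h x - mu) * indicator B x)"
        unfolding A_lp_def by blast
      have "gamble (cyl2 h :: 'a \<times> 'b \<Rightarrow> real)"
        using hB(1) \<open>C2 \<subseteq> cond_pairs\<close> by (auto simp: cond_pairs_def gambles_def cyl2_def intro: gamble_comp)
      moreover have "ereal mu < lowprev_D D (cyl2 h) (B1 \<times> B)" using hB le by fastforce
      ultimately have "(\<lambda>x. (cyl2 h x - mu) * indicator (B1 \<times> B) x) \<in> D"
        by (rule lowprev_D_less_imp_mem[OF D])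
      then show ?thesis unfolding cyl2_shift_indicator f .
    next
      assume "f \<in> gambles_pos"
      then show ?thesis using lift_snd_gambles_pos \<open>B1 \<noteq> {}\<close> coherent_D_pos[OF D] by blast
    qed
  qed (simp_all add: fun_eq_iff algebra_simps)
  then show ?thesis using assms(5) unfolding E_lp_def by blast
qed

lemma indep_product_cyl1:
  assumes Q: "indep_product BB1 BB2 C1 P1 C2 P2 C Q"
    and "C1 \<subseteq> cond_pairs" "\<forall>(f1, B1) \<in> C1. (cyl1 f1, B1 \<times> UNIV) \<in> C"
    and "(f1, B1) \<in> C1" "B2 \<in> BB2 \<union> {UNIV}"
  shows "(cyl1 f1, B1 \<times> B2) \<in> C \<and> Q (cyl1 f1) (B1 \<times> B2) = P1 f1 B1"
proof -
  have "(f1, B1) \<in> cond_pairs" "(cyl1 f1, B1 \<times> UNIV) \<in> C" using assms(2-4) by auto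
  then show ?thesis
    using Q assms(4,5) unfolding indep_product_def epist_indep_def indep_domain_def by fastforce
qed

lemma indep_product_cyl2:
  assumes Q: "indep_product BB1 BB2 C1 P1 C2 P2 C Q"
    and "C2 \<subseteq> cond_pairs" "\<forall>(f2, B2) \<in> C2. (cyl2 f2, UNIV \<times> B2) \<in> C"
    and "(f2, B2) \<in> C2" "B1 \<in> BB1 \<union> {UNIV}"
  shows "(cyl2 f2, B1 \<times> B2) \<in> C \<and> Q (cyl2 f2) (B1 \<times> B2) = P2 f2 B2"
proof -
  have "(f2, B2) \<in> cond_pairs" "(cyl2 f2, UNIV \<times> B2) \<in> C" using assms(2-4) by auto
  then show ?thesis
    using Q assms(4,5) unfolding indep_product_def epist_indep_def indep_domain_def by fastforce
qed

lemma D_prod_E_lp_subset: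
  assumes "{} \<notin> BB1" "{} \<notin> BB2" "coherent_lp C1 P1" "coherent_lp C2 P2"
    and "\<forall>(f1, B1) \<in> C1. (cyl1 f1, B1 \<times> UNIV) \<in> C" "\<forall>(f2, B2) \<in> C2. (cyl2 f2, UNIV \<times> B2) \<in> C"
    and Q: "indep_product BB1 BB2 C1 P1 C2 P2 C Q"
    and D: "coherent_D D" "\<forall>(f, B)\<in>C. Q f B = lowprev_D D f B"
  shows "D_prod BB1 BB2 (E_lp C1 P1) (E_lp C2 P2) \<subseteq> D"
proof -
  have "C1 \<subseteq> cond_pairs" "C2 \<subseteq> cond_pairs" using assms(3,4) unfolding coherent_lp_def by blast+
  have "(\<lambda>p. f1 (fst p) * indicator B2 (snd p)) \<in> D"
    if "f1 \<in> E_lp C1 P1" "B2 \<in> BB2 \<union> {UNIV}" for f1 B2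
  proof (rule lift_fst_E_lp_mem[OF D(1) _ \<open>C1 \<subseteq> cond_pairs\<close> _ that(1)])
    show "B2 \<noteq> {}" using that(2) assms(2) by auto
    show "\<forall>(f, B)\<in>C1. P1 f B \<le> lowprev_D D (cyl1 f) (B \<times> B2)"
      using indep_product_cyl1[OF Q \<open>C1 \<subseteq> cond_pairs\<close> assms(5) _ that(2)] D(2) by fastforce
  qed
  moreover have "(\<lambda>p. f2 (snd p) * indicator B1 (fst p)) \<in> D"
    if "f2 \<in> E_lp C2 P2" "B1 \<in> BB1 \<union> {UNIV}" for f2 B1
  proof (rule lift_snd_E_lp_mem[OF D(1) _ \<open>C2 \<subseteq> cond_pairs\<close> _ that(1)])
    show "B1 \<noteq> {}" using that(2) assms(1) by auto
    show "\<forall>(f, B)\<in>C2. P2 f B \<le> lowprev_D D (cyl2 f) (B1 \<times> B)"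
      using indep_product_cyl2[OF Q \<open>C2 \<subseteq> cond_pairs\<close> assms(6) _ that(2)] D(2) by fastforce
  qed
  ultimately show ?thesis
    unfolding D_prod_def by (intro natext_least[OF D(1)]) blast
qed

lemma indep_product_lowprev_D_prod:
  assumes "{} \<notin> BB1" "{} \<notin> BB2" "coherent_lp C1 P1" "coherent_lp C2 P2"
    and "C \<subseteq> cond_pairs" "indep_domain BB1 BB2 C"
  shows "indep_product BB1 BB2 C1 P1 C2 P2 C (lowprev_D (D_prod BB1 BB2 (E_lp C1 P1) (E_lp C2 P2)))"
proof -
  note E1 = coherent_E_lp[OF assms(3)] and E2 = coherent_E_lp[OF assms(4)]
  note cyl1 = lowprev_D_prod_cyl1[OF E1 E2 assms(1,2)]
    and cyl2 = lowprev_D_prod_cyl2[OF E1 E2 assms(1,2)]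
  show ?thesis
    unfolding indep_product_def epist_indep_def coherent_lp_def
    using assms(5,6) coherent_D_prod[OF E1 E2 assms(1,2)]
    by (auto simp: cyl1 cyl2 lowprev_E_lp[OF assms(3)] lowprev_E_lp[OF assms(4)])
qed

theorem theorem19:
  fixes BB1 :: "'a set set" and BB2 :: "'b set set"
    and C1 :: "(('a \<Rightarrow> real) \<times> 'a set) set" and P1 :: "('a \<Rightarrow> real) \<Rightarrow> 'a set \<Rightarrow> ereal"
    and C2 :: "(('b \<Rightarrow> real) \<times> 'b set) set" and P2 :: "('b \<Rightarrow> real) \<Rightarrow> 'b set \<Rightarrow> ereal"
    and C :: "(('a \<times> 'b \<Rightarrow> real) \<times> ('a \<times> 'b) set) set"
  assumes "{} \<notin> BB1" and "{} \<notin> BB2"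
    and "coherent_lp C1 P1" and "coherent_lp C2 P2"
    and "C \<subseteq> cond_pairs"
    and "indep_domain BB1 BB2 C"
    and "\<forall>(f1, B1) \<in> C1. (cyl1 f1, B1 \<times> UNIV) \<in> C"
    and "\<forall>(f2, B2) \<in> C2. (cyl2 f2, UNIV \<times> B2) \<in> C"
  shows "indep_natext BB1 BB2 C1 P1 C2 P2 C
           (lowprev_D (D_prod BB1 BB2 (E_lp C1 P1) (E_lp C2 P2)))"
proof -
  note product = indep_product_lowprev_D_prod[OF assms(1-6)]
  have least: "lowprev_D (D_prod BB1 BB2 (E_lp C1 P1) (E_lp C2 P2)) f B \<le> Q f B"
    if Q: "indep_product BB1 BB2 C1 P1 C2 P2 C Q" and "(f, B) \<in> C" for Q f B
  proof -
    have "coherent_lp C Q" using Q unfolding indep_product_def epist_indep_def by blast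
    then obtain D where D: "coherent_D D" "\<forall>(f, B)\<in>C. Q f B = lowprev_D D f B"
      unfolding coherent_lp_def by blast
    have "D_prod BB1 BB2 (E_lp C1 P1) (E_lp C2 P2) \<subseteq> D"
      by (rule D_prod_E_lp_subset[OF assms(1-4,7,8) Q D])
    then show ?thesis using lowprev_D_mono[of _ D f B] D(2) \<open>(f, B) \<in> C\<close> by auto
  qed
  show ?thesis
    unfolding indep_natext_def using product least by auto
qed

end
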